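(* Let $\mathcal{S}$ be a state space and let $\mathsf{M}^{(1)},\mathsf{M}^{(2)}$ be dichotomic measurements on $\mathcal{S}$ with outcomes $\{+,-\}$. Then $\mathsf{M}^{(1)}$ and $\mathsf{M}^{(2)}$ are maximally incompatible if and only if $\bar P(\mathsf{M}^{(1)},\mathsf{M}^{(2)})=1$ with optimal states that can be chosen affinely dependent, i.e., if and only if there exist affinely dependent states $s_1,s_2,s_3,s_4\in\mathcal{S}$ with $\mathsf{M}^{(1)}_+(s_1)=\mathsf{M}^{(1)}_+(s_2)=1$, $\mathsf{M}^{(1)}_+(s_3)=\mathsf{M}^{(1)}_+(s_4)=0$, $\mathsf{M}^{(2)}_+(s_1)=\mathsf{M}^{(2)}_+(s_4)=1$, $\mathsf{M}^{(2)}_+(s_2)=\mathsf{M}^{(2)}_+(s_3)=0$.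
   Context: General probabilistic theory setting: a state space $\mathcal{S}$ is a compact convex subset of a finite-dimensional real vector space, embedded as a base of a closed generating proper cone in a vector space $V$, with unit effect $u$. Effects are linear functionals $e$ on $V$ with $0\le e\le1$ on $\mathcal{S}$; $\|f\|=\max_{s\in\mathcal{S}}|f(s)|$. A measurement with finite outcome set $\Omega$ is a map $x\mapsto\mathsf{M}_x$ to effects with $\sum_x\mathsf{M}_x=u$; a dichotomic measurement has outcome set $\{+,-\}$. For dichotomic $\mathsf{M}^{(1)},\mathsf{M}^{(2)}$, $\bar P(\mathsf{M}^{(1)},\mathsf{M}^{(2)})=\frac18\sum_{x,y\in\{+,-\}}\|\mathsf{M}^{(1)}_x+\mathsf{M}^{(2)}_y\|$. A measurement $\mathsf{T}$ is trivial if $\mathsf{T}_x=p_xu$ for a probability distribution $(p_x)$. Two measurements with outcome sets $\Omega_1,\Omega_2$ are compatible if there is a measurement $\mathsf{J}$ on $\Omega_1\times\Omega_2$ whose marginals are the two measurements. The degree of incompatibility $d(\mathsf{M}^{(1)},\mathsf{M}^{(2)})$ is the maximal $\lambda\in[0,1]$ such that $\lambda\mathsf{M}^{(1)}+(1-\lambda)\mathsf{T}^{(1)}$ and $\lambda\mathsf{M}^{(2)}+(1-\lambda)\mathsf{T}^{(2)}$ are compatible for some trivial $\mathsf{T}^{(1)},\mathsf{T}^{(2)}$; the measurements are maximally incompatible if $d(\mathsf{M}^{(1)},\mathsf{M}^{(2)})=\frac12$. *)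

theory Defs
  imports "HOL-Analysis.Analysis"
begin

(* The ambient finite-dimensional real vector space V
is a Euclidean-space type 'a.  The state space S is a compact convex nonempty subset of V
which is a base of the closed, generating, proper cone {t *_R s | t \<ge> 0, s \<in> S}; this is
encoded by a linear unit effect u with u = 1 on S (so 0 is not in S, the cone is closed
and pointed, and S is its base) and span S = V (the cone is generating). *)

definition state_space :: "'a::euclidean_space set \<Rightarrow> ('a \<Rightarrow> real) \<Rightarrow> bool" where
  "state_space S u \<longleftrightarrow> compact S \<and> convex S \<and> S \<noteq> {} \<and> linear u \<and>
     (\<forall>s\<in>S. u s = 1) \<and> span S = UNIV"

definition effect :: "'a::euclidean_space set \<Rightarrow> ('a \<Rightarrow> real) \<Rightarrow> bool" where
  "effect S e \<longleftrightarrow> linear e \<and> (\<forall>s\<in>S. 0 \<le> e s \<and> e s \<le> 1)"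

definition measurement ::
  "'a::euclidean_space set \<Rightarrow> ('a \<Rightarrow> real) \<Rightarrow> 'b set \<Rightarrow> ('b \<Rightarrow> 'a \<Rightarrow> real) \<Rightarrow> bool" where
  "measurement S u \<Omega> M \<longleftrightarrow> finite \<Omega> \<and> (\<forall>x\<in>\<Omega>. effect S (M x)) \<and>
     (\<forall>v. (\<Sum>x\<in>\<Omega>. M x v) = u v)"

datatype pm = Plus | Minus

definition dichotomic :: "pm set" where "dichotomic = {Plus, Minus}"

definition gnorm :: "'a set \<Rightarrow> ('a \<Rightarrow> real) \<Rightarrow> real" where
  "gnorm S f = Sup ((\<lambda>s. \<bar>f s\<bar>) ` S)"

definition Pbar :: "'a set \<Rightarrow> (pm \<Rightarrow> 'a \<Rightarrow> real) \<Rightarrow> (pm \<Rightarrow> 'a \<Rightarrow> real) \<Rightarrow> real" where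
  "Pbar S M1 M2 = (1/8) * (\<Sum>x\<in>dichotomic. \<Sum>y\<in>dichotomic. gnorm S (\<lambda>v. M1 x v + M2 y v))"

definition trivial_meas ::
  "('a \<Rightarrow> real) \<Rightarrow> 'b set \<Rightarrow> ('b \<Rightarrow> 'a \<Rightarrow> real) \<Rightarrow> bool" where
  "trivial_meas u \<Omega> T \<longleftrightarrow> (\<exists>p. (\<forall>x\<in>\<Omega>. 0 \<le> p x) \<and> (\<Sum>x\<in>\<Omega>. p x) = 1 \<and>
      (\<forall>x\<in>\<Omega>. T x = (\<lambda>v. p x * u v)))"

definition compatible ::
  "'a::euclidean_space set \<Rightarrow> ('a \<Rightarrow> real) \<Rightarrow> 'b set \<Rightarrow> 'c set \<Rightarrow>
     ('b \<Rightarrow> 'a \<Rightarrow> real) \<Rightarrow> ('c \<Rightarrow> 'a \<Rightarrow> real) \<Rightarrow> bool" where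
  "compatible S u \<Omega>1 \<Omega>2 M1 M2 \<longleftrightarrow> (\<exists>J. measurement S u (\<Omega>1 \<times> \<Omega>2) J \<and>
      (\<forall>x\<in>\<Omega>1. \<forall>v. (\<Sum>y\<in>\<Omega>2. J (x, y) v) = M1 x v) \<and>
      (\<forall>y\<in>\<Omega>2. \<forall>v. (\<Sum>x\<in>\<Omega>1. J (x, y) v) = M2 y v))"

(* Degree of incompatibility: the maximal l in [0,1] admitting compatible noisy versions
(written as a supremum; the set is nonempty since l = 0 always works). *)
definition degree_incomp ::
  "'a::euclidean_space set \<Rightarrow> ('a \<Rightarrow> real) \<Rightarrow> 'b set \<Rightarrow> 'c set \<Rightarrow>
     ('b \<Rightarrow> 'a \<Rightarrow> real) \<Rightarrow> ('c \<Rightarrow> 'a \<Rightarrow> real) \<Rightarrow> real" where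
  "degree_incomp S u \<Omega>1 \<Omega>2 M1 M2 = Sup {l. 0 \<le> l \<and> l \<le> 1 \<and>
     (\<exists>T1 T2. trivial_meas u \<Omega>1 T1 \<and> trivial_meas u \<Omega>2 T2 \<and>
        compatible S u \<Omega>1 \<Omega>2 (\<lambda>x v. l * M1 x v + (1 - l) * T1 x v)
                                (\<lambda>y v. l * M2 y v + (1 - l) * T2 y v))}"

definition max_incompatible ::
  "'a::euclidean_space set \<Rightarrow> ('a \<Rightarrow> real) \<Rightarrow> (pm \<Rightarrow> 'a \<Rightarrow> real) \<Rightarrow> (pm \<Rightarrow> 'a \<Rightarrow> real) \<Rightarrow> bool" where
  "max_incompatible S u M1 M2 \<longleftrightarrow> degree_incomp S u dichotomic dichotomic M1 M2 = 1/2"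

end

theory Submission
  imports Defs
begin

(* Write e, f for the plus-effects. Two dichotomic measurements are compatible iff some linear
   k (the plus-plus effect of a joint measurement) satisfies max 0 (e + f - 1) <= k <= min e f on
   the states. Mixing both measurements with the uniform trivial measurement at weight 1/2 always
   allows k = (e + f) / 4, so the degree of incompatibility is at least 1/2.
   If there are states s1, s2, s3, s4 on which (e, f) takes the values (1,1), (1,0), (0,0), (0,1)
   with s1 + s3 = s2 + s4 (for such states this is exactly affine dependence), then evaluating the
   linear k at them forces every compatible noise level to be at most 1/2.
   Otherwise the convex hulls of the two diagonals {e = f = 1} u {e = f = 0} and
   {e = 1, f = 0} u {e = 0, f = 1} are disjoint, since a common point would be the midpoint of
   both diagonals. A functional h separating them perturbs the witness to
   k = l (e + f) / 2 + eta h, which is admissible at l = 1/2 + eta for small eta > 0 by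
   compactness of the state space. *)

lemma linear_mult_left_real: "linear f \<Longrightarrow> linear (\<lambda>x. c * f x :: real)"
  using linear_compose_scale_right[of f c] by simp

lemma linear_continuous_on_real:
  fixes e :: "'a::euclidean_space \<Rightarrow> real"
  shows "linear e \<Longrightarrow> continuous_on X e"
  by (simp add: linear_conv_bounded_linear linear_continuous_on)

lemma state_spaceD:
  assumes "state_space S u"
  shows "linear u" "s \<in> S \<Longrightarrow> u s = 1" "compact S" "convex S"
  using assms unfolding state_space_def by auto

lemma effectD:
  assumes "effect S e"
  shows "linear e" "s \<in> S \<Longrightarrow> 0 \<le> e s" "s \<in> S \<Longrightarrow> e s \<le> 1"
  using assms unfolding effect_def by auto

lemma sum_dichotomic [simp]: "(\<Sum>x\<in>dichotomic. g x) = g Plus + g Minus"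
  by (simp add: dichotomic_def)

lemma sum_dichotomic_pairs [simp]:
  "(\<Sum>p\<in>dichotomic \<times> dichotomic. g p) =
     g (Plus, Plus) + g (Plus, Minus) + g (Minus, Plus) + g (Minus, Minus)"
  by (simp add: dichotomic_def algebra_simps)

lemma finite_dichotomic [simp]: "finite dichotomic"
  by (simp add: dichotomic_def)

lemma in_dichotomic [simp]: "x \<in> dichotomic"
  by (cases x) (simp_all add: dichotomic_def)

lemma measurement_dichotomicD:
  assumes "measurement S u dichotomic M"
  shows "effect S (M x)" "M Minus v = u v - M Plus v"
  using assms unfolding measurement_def by (auto simp: algebra_simps)

section \<open>Compatibility of two dichotomic measurements\<close>

lemma compatible_dichotomicD:
  assumes ss: "state_space S u" and compat: "compatible S u dichotomic dichotomic N1 N2"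
  obtains k where "linear k"
    and "\<And>s. s \<in> S \<Longrightarrow> 0 \<le> k s \<and> N1 Plus s + N2 Plus s - 1 \<le> k s \<and>
                        k s \<le> N1 Plus s \<and> k s \<le> N2 Plus s"
proof -
  obtain J where J: "measurement S u (dichotomic \<times> dichotomic) J"
    and marg1: "\<And>v. J (Plus, Plus) v + J (Plus, Minus) v = N1 Plus v"
    and marg2: "\<And>v. J (Plus, Plus) v + J (Minus, Plus) v = N2 Plus v"
    using compat unfolding compatible_def by auto
  have eff: "effect S (J p)" for p
    using J unfolding measurement_def by (cases p) auto
  have total: "J (Plus, Plus) v + J (Plus, Minus) v + J (Minus, Plus) v + J (Minus, Minus) v = u v"
    for v
    using J unfolding measurement_def by simp
  show thesis
  proof (rule that[of "J (Plus, Plus)"])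
    show "linear (J (Plus, Plus))" using effectD(1)[OF eff] .
    fix s assume s: "s \<in> S"
    note nonneg = effectD(2)[OF eff s]
    show "0 \<le> J (Plus, Plus) s \<and> N1 Plus s + N2 Plus s - 1 \<le> J (Plus, Plus) s \<and>
        J (Plus, Plus) s \<le> N1 Plus s \<and> J (Plus, Plus) s \<le> N2 Plus s"
      using nonneg[of "(Plus, Plus)"] nonneg[of "(Plus, Minus)"] nonneg[of "(Minus, Plus)"]
        nonneg[of "(Minus, Minus)"] marg1[of s] marg2[of s] total[of s] state_spaceD(2)[OF ss s]
      by linarith
  qed
qed

lemma compatible_dichotomicI:
  assumes ss: "state_space S u"
    and N1: "measurement S u dichotomic N1" and N2: "measurement S u dichotomic N2"
    and k: "linear k"
    and bounds: "\<And>s. s \<in> S \<Longrightarrow> 0 \<le> k s \<and> N1 Plus s + N2 Plus s - 1 \<le> k s \<and>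
                                 k s \<le> N1 Plus s \<and> k s \<le> N2 Plus s"
  shows "compatible S u dichotomic dichotomic N1 N2"
proof -
  define J :: "pm \<times> pm \<Rightarrow> 'a \<Rightarrow> real" where
    "J = (\<lambda>p v. case p of
        (Plus, Plus) \<Rightarrow> k v
      | (Plus, Minus) \<Rightarrow> N1 Plus v - k v
      | (Minus, Plus) \<Rightarrow> N2 Plus v - k v
      | (Minus, Minus) \<Rightarrow> u v - N1 Plus v - N2 Plus v + k v)"
  have lin: "linear (N1 Plus)" "linear (N2 Plus)" "linear u"
    using effectD(1)[OF measurement_dichotomicD(1)[OF N1]]
      effectD(1)[OF measurement_dichotomicD(1)[OF N2]] state_spaceD(1)[OF ss] by auto
  have J_effect: "effect S (J (x, y))" for x y
  proof -
    have "linear (J (x, y))"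
      using k lin by (cases x; cases y) (simp_all add: J_def linear_compose_add linear_compose_sub)
    moreover have "0 \<le> J (x, y) s \<and> J (x, y) s \<le> 1" if s: "s \<in> S" for s
      using bounds[OF s] state_spaceD(2)[OF ss s] by (cases x; cases y) (auto simp: J_def)
    ultimately show ?thesis unfolding effect_def by blast
  qed
  have "measurement S u (dichotomic \<times> dichotomic) J"
    unfolding measurement_def using J_effect by (simp add: J_def)
  moreover have "(\<Sum>y\<in>dichotomic. J (x, y) v) = N1 x v" for x v
    using measurement_dichotomicD(2)[OF N1] by (cases x) (simp_all add: J_def)
  moreover have "(\<Sum>x\<in>dichotomic. J (x, y) v) = N2 y v" for y v
    using measurement_dichotomicD(2)[OF N2] by (cases y) (simp_all add: J_def)
  ultimately show ?thesis
    unfolding compatible_def by blast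
qed

section \<open>Noisy versions and the degree of incompatibility\<close>

definition noisy ::
  "real \<Rightarrow> ('b \<Rightarrow> 'a \<Rightarrow> real) \<Rightarrow> ('b \<Rightarrow> 'a \<Rightarrow> real) \<Rightarrow> 'b \<Rightarrow> 'a \<Rightarrow> real" where
  "noisy l M T = (\<lambda>x v. l * M x v + (1 - l) * T x v)"

definition noisy_compatible ::
  "'a::euclidean_space set \<Rightarrow> ('a \<Rightarrow> real) \<Rightarrow> 'b set \<Rightarrow> 'c set \<Rightarrow>
     ('b \<Rightarrow> 'a \<Rightarrow> real) \<Rightarrow> ('c \<Rightarrow> 'a \<Rightarrow> real) \<Rightarrow> real \<Rightarrow> bool" where
  "noisy_compatible S u \<Omega>1 \<Omega>2 M1 M2 l \<longleftrightarrow>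
    (\<exists>T1 T2. trivial_meas u \<Omega>1 T1 \<and> trivial_meas u \<Omega>2 T2 \<and>
      compatible S u \<Omega>1 \<Omega>2 (noisy l M1 T1) (noisy l M2 T2))"

lemma degree_incomp_eq_half_iff:
  assumes "noisy_compatible S u \<Omega>1 \<Omega>2 M1 M2 (1/2)"
  shows "degree_incomp S u \<Omega>1 \<Omega>2 M1 M2 = 1/2 \<longleftrightarrow>
    (\<forall>l\<in>{0..1}. noisy_compatible S u \<Omega>1 \<Omega>2 M1 M2 l \<longrightarrow> l \<le> 1/2)"
proof -
  define L where "L = {l. 0 \<le> l \<and> l \<le> 1 \<and> noisy_compatible S u \<Omega>1 \<Omega>2 M1 M2 l}"
  have half: "1/2 \<in> L" and bdd: "bdd_above L"
    using assms by (auto simp: L_def intro: bdd_aboveI[of _ 1])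
  have "Sup L = 1/2 \<longleftrightarrow> (\<forall>l\<in>L. l \<le> 1/2)"
    using cSup_eq_maximum[OF half] cSup_upper[OF _ bdd] by metis
  moreover have "degree_incomp S u \<Omega>1 \<Omega>2 M1 M2 = Sup L"
    by (simp add: degree_incomp_def L_def noisy_compatible_def noisy_def)
  ultimately show ?thesis by (auto simp: L_def)
qed

lemma measurement_noisy:
  assumes ss: "state_space S u" and M: "measurement S u \<Omega> M" and T: "trivial_meas u \<Omega> T"
    and l: "0 \<le> l" "l \<le> 1"
  shows "measurement S u \<Omega> (noisy l M T)"
proof -
  obtain p where p: "\<And>x. x \<in> \<Omega> \<Longrightarrow> 0 \<le> p x" "(\<Sum>x\<in>\<Omega>. p x) = 1"
    and Tp: "\<And>x. x \<in> \<Omega> \<Longrightarrow> T x = (\<lambda>v. p x * u v)"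
    using T unfolding trivial_meas_def by blast
  have fin: "finite \<Omega>" using M unfolding measurement_def by blast
  have "effect S (noisy l M T x)" if x: "x \<in> \<Omega>" for x
  proof -
    have Mx: "effect S (M x)" using M x unfolding measurement_def by blast
    have "p x \<le> 1"
      using member_le_sum[of x \<Omega> p] x p fin by auto
    moreover have "linear (noisy l M T x)"
      using effectD(1)[OF Mx] state_spaceD(1)[OF ss]
      by (simp add: noisy_def Tp[OF x] linear_compose_add linear_mult_left_real mult.assoc[symmetric])
    moreover have "0 \<le> l * M x s + (1 - l) * p x" "l * M x s + (1 - l) * p x \<le> 1" if "s \<in> S" for s
      using effectD(2,3)[OF Mx that] p(1)[OF x] l \<open>p x \<le> 1\<close>
      by (auto intro: convex_bound_le)
    ultimately show ?thesis
      unfolding effect_def noisy_def using Tp[OF x] state_spaceD(2)[OF ss] by auto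
  qed
  moreover have "(\<Sum>x\<in>\<Omega>. noisy l M T x v) = u v" for v
  proof -
    have "(\<Sum>x\<in>\<Omega>. noisy l M T x v) =
        l * (\<Sum>x\<in>\<Omega>. M x v) + (1 - l) * (\<Sum>x\<in>\<Omega>. p x) * u v"
      by (simp add: noisy_def Tp sum.distrib sum_distrib_left sum_distrib_right mult.assoc)
    then show ?thesis using M p(2) unfolding measurement_def by (simp add: algebra_simps)
  qed
  ultimately show ?thesis using fin unfolding measurement_def by blast
qed

lemma trivial_meas_uniform: "trivial_meas u dichotomic (\<lambda>_ v. u v / 2)"
  unfolding trivial_meas_def by (intro exI[of _ "\<lambda>_. 1/2"]) (simp add: dichotomic_def)

lemma noisy_compatible_uniformI:
  assumes ss: "state_space S u"
    and M1: "measurement S u dichotomic M1" and M2: "measurement S u dichotomic M2"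
    and l: "0 \<le> l" "l \<le> 1" and k: "linear k"
    and bounds: "\<And>s. s \<in> S \<Longrightarrow> 0 \<le> k s \<and> l * M1 Plus s + l * M2 Plus s - l \<le> k s \<and>
        k s \<le> l * M1 Plus s + (1 - l) / 2 \<and> k s \<le> l * M2 Plus s + (1 - l) / 2"
  shows "noisy_compatible S u dichotomic dichotomic M1 M2 l"
proof -
  let ?T = "\<lambda>_ v. u v / 2"
  have on_states: "noisy l M ?T Plus s = l * M Plus s + (1 - l) / 2" if "s \<in> S" for M s
    using state_spaceD(2)[OF ss that] by (simp add: noisy_def)
  have "compatible S u dichotomic dichotomic (noisy l M1 ?T) (noisy l M2 ?T)"
  proof (rule compatible_dichotomicI[OF ss _ _ k])
    show "measurement S u dichotomic (noisy l M1 ?T)" "measurement S u dichotomic (noisy l M2 ?T)"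
      using measurement_noisy[OF ss _ trivial_meas_uniform l] M1 M2 by auto
    show "0 \<le> k s \<and> noisy l M1 ?T Plus s + noisy l M2 ?T Plus s - 1 \<le> k s \<and>
        k s \<le> noisy l M1 ?T Plus s \<and> k s \<le> noisy l M2 ?T Plus s" if "s \<in> S" for s
      using bounds[OF that] by (simp add: on_states[OF that])
  qed
  then show ?thesis
    unfolding noisy_compatible_def using trivial_meas_uniform by blast
qed

lemma noisy_compatible_half:
  assumes ss: "state_space S u"
    and M1: "measurement S u dichotomic M1" and M2: "measurement S u dichotomic M2"
  shows "noisy_compatible S u dichotomic dichotomic M1 M2 (1/2)"
proof (rule noisy_compatible_uniformI[OF assms])
  note e = measurement_dichotomicD(1)[OF M1, of Plus] and f = measurement_dichotomicD(1)[OF M2, of Plus]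
  show "linear (\<lambda>v. 1/4 * (M1 Plus v + M2 Plus v))"
    using effectD(1)[OF e] effectD(1)[OF f] by (intro linear_mult_left_real linear_compose_add)
  fix s assume s: "s \<in> S"
  show "0 \<le> 1/4 * (M1 Plus s + M2 Plus s) \<and>
      1/2 * M1 Plus s + 1/2 * M2 Plus s - 1/2 \<le> 1/4 * (M1 Plus s + M2 Plus s) \<and>
      1/4 * (M1 Plus s + M2 Plus s) \<le> 1/2 * M1 Plus s + (1 - 1/2) / 2 \<and>
      1/4 * (M1 Plus s + M2 Plus s) \<le> 1/2 * M2 Plus s + (1 - 1/2) / 2"
    using effectD(2,3)[OF e s] effectD(2,3)[OF f s] by simp
qed simp_all

section \<open>Affinely dependent optimal states\<close>

definition joint_level_set ::
  "'a set \<Rightarrow> ('a \<Rightarrow> real) \<Rightarrow> ('a \<Rightarrow> real) \<Rightarrow> real \<Rightarrow> real \<Rightarrow> 'a set"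
  where "joint_level_set S e f a b = {s\<in>S. e s = a \<and> f s = b}"

definition optimal_parallelogram ::
  "'a::real_vector set \<Rightarrow> ('a \<Rightarrow> real) \<Rightarrow> ('a \<Rightarrow> real) \<Rightarrow> bool"
  where "optimal_parallelogram S e f \<longleftrightarrow>
    (\<exists>s1\<in>joint_level_set S e f 1 1. \<exists>s2\<in>joint_level_set S e f 1 0.
     \<exists>s3\<in>joint_level_set S e f 0 0. \<exists>s4\<in>joint_level_set S e f 0 1. s1 + s3 = s2 + s4)"

lemma affine_dependent_iff_parallelogram:
  fixes e f :: "'a::euclidean_space \<Rightarrow> real"
  assumes lin: "linear e" "linear f"
    and levels: "e s1 = 1" "e s2 = 1" "e s3 = 0" "e s4 = 0" "f s1 = 1" "f s4 = 1" "f s2 = 0" "f s3 = 0"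
  shows "affine_dependent {s1, s2, s3, s4} \<longleftrightarrow> s1 + s3 = s2 + s4"
proof -
  have distinct: "s1 \<noteq> s2" "s1 \<noteq> s3" "s1 \<noteq> s4" "s2 \<noteq> s3" "s2 \<noteq> s4" "s3 \<noteq> s4"
    using levels by auto
  note explicit = affine_dependent_explicit_finite[of "{s1, s2, s3, s4}", simplified]
  show ?thesis
  proof
    assume "affine_dependent {s1, s2, s3, s4}"
    then obtain c where c_sum: "c s1 + c s2 + c s3 + c s4 = 0"
      and c_nonzero: "c s1 \<noteq> 0 \<or> c s2 \<noteq> 0 \<or> c s3 \<noteq> 0 \<or> c s4 \<noteq> 0"
      and comb: "c s1 *\<^sub>R s1 + c s2 *\<^sub>R s2 + c s3 *\<^sub>R s3 + c s4 *\<^sub>R s4 = 0"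
      unfolding explicit using distinct by (auto simp: algebra_simps)
    have "c s1 + c s2 = 0"
      using arg_cong[OF comb, of e] levels
      by (simp add: linear_add[OF lin(1)] linear_scale[OF lin(1)] linear_0[OF lin(1)])
    moreover have "c s1 + c s4 = 0"
      using arg_cong[OF comb, of f] levels
      by (simp add: linear_add[OF lin(2)] linear_scale[OF lin(2)] linear_0[OF lin(2)])
    ultimately have c: "c s2 = - c s1" "c s3 = c s1" "c s4 = - c s1" "c s1 \<noteq> 0"
      using c_sum c_nonzero by auto
    then have "c s1 *\<^sub>R ((s1 + s3) - (s2 + s4)) = 0"
      using comb by (simp add: algebra_simps)
    then show "s1 + s3 = s2 + s4" using c(4) by simp
  next
    assume "s1 + s3 = s2 + s4"
    then show "affine_dependent {s1, s2, s3, s4}"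
      unfolding explicit using distinct
      by (intro exI[of _ "\<lambda>v. if v = s1 \<or> v = s3 then 1 else -1"]) (auto simp: algebra_simps)
  qed
qed

lemma gnorm_eqI:
  assumes "s0 \<in> S" "\<And>s. s \<in> S \<Longrightarrow> \<bar>g s\<bar> \<le> g s0"
  shows "gnorm S g = g s0"
  unfolding gnorm_def
  by (rule cSup_eq_maximum) (use assms in \<open>force+\<close>)

lemma Pbar_eq_1I:
  assumes M1: "measurement S u dichotomic M1" and M2: "measurement S u dichotomic M2"
    and optimal: "\<And>x y. \<exists>s\<in>S. M1 x s = 1 \<and> M2 y s = 1"
  shows "Pbar S M1 M2 = 1"
proof -
  have "gnorm S (\<lambda>v. M1 x v + M2 y v) = 2" for x y
  proof -
    obtain s0 where "s0 \<in> S" "M1 x s0 = 1" "M2 y s0 = 1"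
      using optimal by blast
    moreover have "\<bar>M1 x s + M2 y s\<bar> \<le> 2" if "s \<in> S" for s
      using effectD(2,3)[OF measurement_dichotomicD(1)[OF M1] that, of x]
        effectD(2,3)[OF measurement_dichotomicD(1)[OF M2] that, of y] by fastforce
    ultimately show ?thesis
      using gnorm_eqI[of s0 S "\<lambda>v. M1 x v + M2 y v"] by simp
  qed
  then show ?thesis by (simp add: Pbar_def dichotomic_def)
qed

lemma optimal_parallelogram_iff_affine_dependent:
  assumes ss: "state_space S u"
    and M1: "measurement S u dichotomic M1" and M2: "measurement S u dichotomic M2"
  shows "optimal_parallelogram S (M1 Plus) (M2 Plus) \<longleftrightarrow>
    (Pbar S M1 M2 = 1 \<and>
     (\<exists>s1 s2 s3 s4. s1 \<in> S \<and> s2 \<in> S \<and> s3 \<in> S \<and> s4 \<in> S \<and>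
        affine_dependent {s1, s2, s3, s4} \<and>
        M1 Plus s1 = 1 \<and> M1 Plus s2 = 1 \<and> M1 Plus s3 = 0 \<and> M1 Plus s4 = 0 \<and>
        M2 Plus s1 = 1 \<and> M2 Plus s4 = 1 \<and> M2 Plus s2 = 0 \<and> M2 Plus s3 = 0))"
    (is "_ \<longleftrightarrow> _ \<and> (\<exists>s1 s2 s3 s4. ?optimal s1 s2 s3 s4)")
proof -
  have lin: "linear (M1 Plus)" "linear (M2 Plus)"
    using effectD(1) measurement_dichotomicD(1) M1 M2 by blast+
  have Minus: "M Minus s = 1 - M Plus s" if "measurement S u dichotomic M" "s \<in> S" for M s
    using measurement_dichotomicD(2)[OF that(1)] state_spaceD(2)[OF ss that(2)] by simp
  show ?thesis
  proof
    assume "optimal_parallelogram S (M1 Plus) (M2 Plus)"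
    then obtain s1 s2 s3 s4 where "s1 \<in> S" "s2 \<in> S" "s3 \<in> S" "s4 \<in> S"
      and levels: "M1 Plus s1 = 1" "M1 Plus s2 = 1" "M1 Plus s3 = 0" "M1 Plus s4 = 0"
        "M2 Plus s1 = 1" "M2 Plus s4 = 1" "M2 Plus s2 = 0" "M2 Plus s3 = 0"
      and "s1 + s3 = s2 + s4"
      unfolding optimal_parallelogram_def joint_level_set_def by auto
    moreover have "Pbar S M1 M2 = 1"
    proof (rule Pbar_eq_1I[OF M1 M2])
      fix x y
      show "\<exists>s\<in>S. M1 x s = 1 \<and> M2 y s = 1"
        using calculation Minus[OF M1] Minus[OF M2] by (cases x; cases y) auto
    qed
    ultimately show "Pbar S M1 M2 = 1 \<and> (\<exists>s1 s2 s3 s4. ?optimal s1 s2 s3 s4)"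
      using affine_dependent_iff_parallelogram[OF lin levels] by blast
  next
    assume "Pbar S M1 M2 = 1 \<and> (\<exists>s1 s2 s3 s4. ?optimal s1 s2 s3 s4)"
    then obtain s1 s2 s3 s4 where "?optimal s1 s2 s3 s4" by blast
    then show "optimal_parallelogram S (M1 Plus) (M2 Plus)"
      using affine_dependent_iff_parallelogram[OF lin]
      unfolding optimal_parallelogram_def joint_level_set_def by blast
  qed
qed

lemma noisy_compatible_le_half:
  assumes ss: "state_space S u"
    and parallelogram: "optimal_parallelogram S (M1 Plus) (M2 Plus)"
    and nc: "noisy_compatible S u dichotomic dichotomic M1 M2 l"
  shows "l \<le> 1/2"
proof -
  obtain s1 s2 s3 s4 where st: "s1 \<in> S" "s2 \<in> S" "s3 \<in> S" "s4 \<in> S"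
    and levels: "M1 Plus s1 = 1" "M1 Plus s2 = 1" "M1 Plus s3 = 0" "M1 Plus s4 = 0"
      "M2 Plus s1 = 1" "M2 Plus s4 = 1" "M2 Plus s2 = 0" "M2 Plus s3 = 0"
    and par: "s1 + s3 = s2 + s4"
    using parallelogram unfolding optimal_parallelogram_def joint_level_set_def by auto
  obtain T1 T2 where T: "trivial_meas u dichotomic T1" "trivial_meas u dichotomic T2"
    and compat: "compatible S u dichotomic dichotomic (noisy l M1 T1) (noisy l M2 T2)"
    using nc unfolding noisy_compatible_def by blast
  obtain p1 p2 where p: "T1 Plus = (\<lambda>v. p1 * u v)" "T2 Plus = (\<lambda>v. p2 * u v)"
    using T unfolding trivial_meas_def by auto
  obtain k where k: "linear k"
    and bounds: "\<And>s. s \<in> S \<Longrightarrow>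
        0 \<le> k s \<and> noisy l M1 T1 Plus s + noisy l M2 T2 Plus s - 1 \<le> k s \<and>
        k s \<le> noisy l M1 T1 Plus s \<and> k s \<le> noisy l M2 T2 Plus s"
    using compatible_dichotomicD[OF ss compat] by blast
  have noisy_at: "noisy l M1 T1 Plus s = l * M1 Plus s + (1 - l) * p1"
    "noisy l M2 T2 Plus s = l * M2 Plus s + (1 - l) * p2" if "s \<in> S" for s
    using state_spaceD(2)[OF ss that] by (simp_all add: noisy_def p)
  have "k s1 + k s3 = k s2 + k s4"
    using par linear_add[OF k] by metis
  moreover have "2 * l - 1 + (1 - l) * p1 + (1 - l) * p2 \<le> k s1" "0 \<le> k s3"
    "k s2 \<le> (1 - l) * p2" "k s4 \<le> (1 - l) * p1"
    using bounds[OF st(1)] bounds[OF st(2)] bounds[OF st(3)] bounds[OF st(4)]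
      noisy_at[OF st(1)] noisy_at[OF st(2)] noisy_at[OF st(4)] levels by auto
  ultimately show ?thesis by linarith
qed

section \<open>Separating the two diagonals of the outcome square\<close>

lemma
  fixes e f :: "'a::euclidean_space \<Rightarrow> real"
  assumes "linear e" "linear f"
  shows compact_joint_level_set: "compact S \<Longrightarrow> compact (joint_level_set S e f a b)"
    and convex_joint_level_set: "convex S \<Longrightarrow> convex (joint_level_set S e f a b)"
proof -
  have eq: "joint_level_set S e f a b = S \<inter> e -` {a} \<inter> f -` {b}"
    by (auto simp: joint_level_set_def)
  have "closed (e -` {a})" "closed (f -` {b})"
    using assms by (auto intro!: continuous_closed_vimage simp: linear_conv_bounded_linear
        linear_continuous_at)
  then show "compact S \<Longrightarrow> compact (joint_level_set S e f a b)"
    unfolding eq by (intro compact_Int_closed closed_Int)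
  show "convex S \<Longrightarrow> convex (joint_level_set S e f a b)"
    unfolding eq using assms by (intro convex_Int convex_linear_vimage convex_singleton)
qed

lemma midpoint_in_convex_hull_Un:
  fixes e :: "'a::euclidean_space \<Rightarrow> real"
  assumes "convex P" "convex Q" "linear e"
    and "\<And>x. x \<in> P \<Longrightarrow> e x = 1" "\<And>y. y \<in> Q \<Longrightarrow> e y = 0"
    and z: "z \<in> convex hull (P \<union> Q)" "e z = 1/2"
  shows "\<exists>x\<in>P. \<exists>y\<in>Q. midpoint x y = z"
proof -
  have "P \<noteq> {}" "Q \<noteq> {}"
    using assms by (auto simp: hull_same)
  then obtain a b x y where ab: "a + b = 1" and xy: "x \<in> P" "y \<in> Q"
    and z_comb: "z = a *\<^sub>R x + b *\<^sub>R y"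
    using z(1) convex_hull_union_two[OF assms(1) _ assms(2)] by blast
  have "e z = a"
    using z_comb xy assms(4,5) by (simp add: linear_add[OF assms(3)] linear_scale[OF assms(3)])
  then have "a = 1/2" "b = 1/2"
    using z(2) ab by simp_all
  then have "midpoint x y = z"
    unfolding midpoint_eq_iff z_comb by (simp add: algebra_simps flip: scaleR_add_left)
  then show ?thesis
    using xy by blast
qed

lemma convex_hulls_diagonals_disjoint:
  fixes e f :: "'a::euclidean_space \<Rightarrow> real"
  assumes ss: "state_space S u" and lin: "linear e" "linear f"
    and no_parallelogram: "\<not> optimal_parallelogram S e f"
  shows "convex hull (joint_level_set S e f 1 1 \<union> joint_level_set S e f 0 0) \<inter>
         convex hull (joint_level_set S e f 1 0 \<union> joint_level_set S e f 0 1) = {}"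
    (is "convex hull (?J11 \<union> ?J00) \<inter> convex hull (?J10 \<union> ?J01) = {}")
proof (rule ccontr)
  assume "convex hull (?J11 \<union> ?J00) \<inter> convex hull (?J10 \<union> ?J01) \<noteq> {}"
  then obtain z where z: "z \<in> convex hull (?J11 \<union> ?J00)" "z \<in> convex hull (?J10 \<union> ?J01)"
    by blast
  have convex: "convex (joint_level_set S e f a b)" for a b
    using convex_joint_level_set[OF lin state_spaceD(4)[OF ss]] .
  have convex_kernel: "convex {x. g x = 0}" if "linear g" for g :: "'a \<Rightarrow> real"
    using convex_linear_vimage[OF that convex_singleton[of 0]] by (simp add: vimage_def)
  have "convex hull (?J11 \<union> ?J00) \<subseteq> S \<inter> {x. e x - f x = 0}"
    using state_spaceD(4)[OF ss] lin
    by (intro hull_minimal convex_Int convex_kernel linear_compose_sub)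
      (auto simp: joint_level_set_def)
  moreover have "convex hull (?J10 \<union> ?J01) \<subseteq> {x. e x + f x - u x = 0}"
    using state_spaceD(1,2)[OF ss] lin
    by (intro hull_minimal convex_kernel linear_compose_sub linear_compose_add)
      (auto simp: joint_level_set_def)
  ultimately have "z \<in> S" "e z - f z = 0" "e z + f z - u z = 0"
    using z by auto
  then have "e z = 1/2"
    using state_spaceD(2)[OF ss] by fastforce
  have level: "x \<in> joint_level_set S e f a b \<Longrightarrow> e x = a" for x a b
    by (simp add: joint_level_set_def)
  obtain x y where "x \<in> ?J11" "y \<in> ?J00" "midpoint x y = z"
    using midpoint_in_convex_hull_Un[OF convex convex lin(1) level[of _ 1 1] level[of _ 0 0] z(1)
        \<open>e z = 1/2\<close>] by blast
  moreover obtain x' y' where "x' \<in> ?J10" "y' \<in> ?J01" "midpoint x' y' = z"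
    using midpoint_in_convex_hull_Un[OF convex convex lin(1) level[of _ 1 0] level[of _ 0 1] z(2)
        \<open>e z = 1/2\<close>] by blast
  ultimately have "x + y = x' + y'"
    by (simp add: midpoint_eq_iff)
  then show False
    using no_parallelogram \<open>x \<in> ?J11\<close> \<open>y \<in> ?J00\<close> \<open>x' \<in> ?J10\<close> \<open>y' \<in> ?J01\<close>
    unfolding optimal_parallelogram_def by blast
qed

lemma separating_linear_functional:
  fixes A B :: "'a::euclidean_space set" and u :: "'a \<Rightarrow> real"
  assumes "compact A" "compact B" "convex hull A \<inter> convex hull B = {}"
    and u: "linear u" "\<And>s. s \<in> A \<union> B \<Longrightarrow> u s = 1"
  shows "\<exists>h::'a \<Rightarrow> real. linear h \<and> (\<forall>s\<in>A. 0 < h s) \<and> (\<forall>s\<in>B. h s < -1)"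
proof (cases "B = {}")
  case True
  then show ?thesis using u by (auto intro!: exI[of _ u])
next
  case False
  obtain a b where a_A: "\<forall>x\<in>convex hull A. inner a x < b" and a_B: "\<forall>x\<in>convex hull B. b < inner a x"
    using separating_hyperplane_closed_compact[OF convex_convex_hull
        compact_imp_closed[OF compact_convex_hull] convex_convex_hull compact_convex_hull]
      assms False by (metis hull_subset subset_empty)
  obtain x0 where x0: "x0 \<in> B" "\<And>x. x \<in> B \<Longrightarrow> inner a x0 \<le> inner a x"
    using continuous_attains_inf[OF assms(2) False, of "inner a"] continuous_on_inner[OF continuous_on_const continuous_on_id]
    by metis
  define c where "c = inner a x0 - b"
  have "0 < c"
    using a_B x0(1) hull_subset[of B convex] unfolding c_def by force
  define h where "h x = (2 / c) * (b * u x - inner a x)" for x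
  have "linear h"
    using u(1) unfolding h_def
    by (intro linear_mult_left_real linear_compose_sub bounded_linear.linear[OF bounded_linear_inner_right])
  moreover have "0 < h s" if "s \<in> A" for s
    using a_A hull_subset[of A convex] that u(2)[of s] \<open>0 < c\<close> by (force simp: h_def)
  moreover have "h s < -1" if "s \<in> B" for s
  proof -
    have "b - inner a s \<le> - c"
      using x0(2)[OF that] unfolding c_def by linarith
    then have "(2 / c) * (b - inner a s) \<le> (2 / c) * (- c)"
      using \<open>0 < c\<close> by (intro mult_left_mono) auto
    then show ?thesis
      using \<open>0 < c\<close> u(2)[of s] that by (simp add: h_def)
  qed
  ultimately show ?thesis by blast
qed

section \<open>Exceeding one half in the absence of a parallelogram\<close>

lemma eventually_nonneg_perturbation:
  fixes \<sigma> g :: "'a::topological_space \<Rightarrow> real"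
  assumes S: "compact S" and cont: "continuous_on S \<sigma>" "continuous_on S g"
    and nonneg: "\<And>s. s \<in> S \<Longrightarrow> 0 \<le> \<sigma> s"
    and zeros: "\<And>s. s \<in> S \<Longrightarrow> \<sigma> s = 0 \<Longrightarrow> 0 < g s"
  shows "\<forall>\<^sub>F t in at_right 0. \<forall>s\<in>S. 0 \<le> \<sigma> s + t * g s"
proof (cases "S = {}")
  case True
  then show ?thesis by simp
next
  case False
  \<comment> \<open>\<open>max \<sigma> g\<close> has a positive minimum m, so \<open>\<sigma> \<ge> m\<close> wherever g is negative\<close>
  obtain s0 where s0: "s0 \<in> S" "\<And>s. s \<in> S \<Longrightarrow> max (\<sigma> s0) (g s0) \<le> max (\<sigma> s) (g s)"
    using continuous_attains_inf[OF S False continuous_on_max[OF cont]] by blast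
  define m where "m = max (\<sigma> s0) (g s0)"
  have "0 < m"
    using nonneg[OF s0(1)] zeros[OF s0(1)] unfolding m_def by fastforce
  obtain s1 where s1: "s1 \<in> S" "\<And>s. s \<in> S \<Longrightarrow> g s1 \<le> g s"
    using continuous_attains_inf[OF S False cont(2)] by blast
  define M where "M = max 1 (- g s1)"
  have "0 < M" by (simp add: M_def)
  have "0 \<le> \<sigma> s + t * g s" if t: "0 < t" "t < m / M" and s: "s \<in> S" for t s
  proof (cases "0 \<le> g s")
    case True
    then show ?thesis using nonneg[OF s] t by simp
  next
    case False
    then have "m \<le> \<sigma> s"
      using s0(2)[OF s] \<open>0 < m\<close> unfolding m_def[symmetric] le_max_iff_disj by linarith
    moreover have "t * (- M) \<le> t * g s"
      using s1(2)[OF s] t by (intro mult_left_mono) (auto simp: M_def)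
    moreover have "t * M \<le> m"
      using t \<open>0 < M\<close> by (simp add: field_simps)
    ultimately show ?thesis by linarith
  qed
  then show ?thesis
    unfolding eventually_at_right_field using \<open>0 < m\<close> \<open>0 < M\<close> by (auto intro!: exI[of _ "m / M"])
qed

lemma diagonals_separating_functional:
  fixes e f :: "'a::euclidean_space \<Rightarrow> real"
  assumes ss: "state_space S u" and lin: "linear e" "linear f"
    and no_parallelogram: "\<not> optimal_parallelogram S e f"
  shows "\<exists>h::'a \<Rightarrow> real. linear h \<and>
    (\<forall>s\<in>joint_level_set S e f 1 1 \<union> joint_level_set S e f 0 0. 0 < h s) \<and>
    (\<forall>s\<in>joint_level_set S e f 1 0 \<union> joint_level_set S e f 0 1. h s < -1)"
proof (rule separating_linear_functional)
  have "compact (joint_level_set S e f a b)" for a b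
    using compact_joint_level_set[OF lin state_spaceD(3)[OF ss]] .
  then show "compact (joint_level_set S e f 1 1 \<union> joint_level_set S e f 0 0)"
    "compact (joint_level_set S e f 1 0 \<union> joint_level_set S e f 0 1)"
    by auto
  show "u s = 1" if "s \<in> (joint_level_set S e f 1 1 \<union> joint_level_set S e f 0 0) \<union>
      (joint_level_set S e f 1 0 \<union> joint_level_set S e f 0 1)" for s
    using that state_spaceD(2)[OF ss] by (auto simp: joint_level_set_def)
qed (use convex_hulls_diagonals_disjoint[OF assms] state_spaceD(1)[OF ss] in auto)

lemma eventually_nonneg_perturbation_pair:
  fixes \<sigma>1 \<sigma>2 g :: "'a::topological_space \<Rightarrow> real"
  assumes S: "compact S" and cont: "continuous_on S \<sigma>1" "continuous_on S \<sigma>2" "continuous_on S g"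
    and nonneg: "\<And>s. s \<in> S \<Longrightarrow> 0 \<le> \<sigma>1 s \<and> 0 \<le> \<sigma>2 s"
    and zeros: "\<And>s. s \<in> S \<Longrightarrow> \<sigma>1 s = 0 \<or> \<sigma>2 s = 0 \<Longrightarrow> 0 < g s"
  shows "\<forall>\<^sub>F t in at_right 0. \<forall>s\<in>S. 0 \<le> \<sigma>1 s + t * g s \<and> 0 \<le> \<sigma>2 s + t * g s"
proof -
  have "\<forall>\<^sub>F t in at_right 0. \<forall>s\<in>S. 0 \<le> min (\<sigma>1 s) (\<sigma>2 s) + t * g s"
  proof (rule eventually_nonneg_perturbation[OF S _ cont(3)])
    show "continuous_on S (\<lambda>s. min (\<sigma>1 s) (\<sigma>2 s))"
      using cont(1,2) by (rule continuous_on_min)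
  qed (use nonneg zeros in \<open>auto simp: min_def split: if_splits\<close>)
  then show ?thesis
    by (rule eventually_mono) (smt (verit) min.cobounded1 min.cobounded2)
qed

lemma eventually_admissible_perturbation:
  fixes e f h :: "'a::euclidean_space \<Rightarrow> real"
  assumes S: "compact S" and lin: "linear e" "linear f" "linear h"
    and range: "\<And>s. s \<in> S \<Longrightarrow> 0 \<le> e s \<and> e s \<le> 1 \<and> 0 \<le> f s \<and> f s \<le> 1"
    and pos: "\<forall>s\<in>joint_level_set S e f 1 1 \<union> joint_level_set S e f 0 0. 0 < h s"
    and neg: "\<forall>s\<in>joint_level_set S e f 1 0 \<union> joint_level_set S e f 0 1. h s < -1"
  shows "\<forall>\<^sub>F t in at_right 0. \<forall>s\<in>S.
    0 \<le> (e s + f s) / 4 + t * h s \<and> 0 \<le> (2 - e s - f s) / 4 + t * h s \<and>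
    0 \<le> (1 + e s - f s) / 4 + t * (- h s - 1) \<and> 0 \<le> (1 - e s + f s) / 4 + t * (- h s - 1)"
proof -
  have cont: "continuous_on S e" "continuous_on S f" "continuous_on S h"
    using linear_continuous_on_real lin by blast+
  have "\<forall>\<^sub>F t in at_right 0. \<forall>s\<in>S.
      0 \<le> (e s + f s) / 4 + t * h s \<and> 0 \<le> (2 - e s - f s) / 4 + t * h s"
  proof (rule eventually_nonneg_perturbation_pair[OF S])
    show "continuous_on S (\<lambda>s. (e s + f s) / 4)" "continuous_on S (\<lambda>s. (2 - e s - f s) / 4)"
      "continuous_on S h"
      using cont by (auto intro!: continuous_intros)
    show "0 \<le> (e s + f s) / 4 \<and> 0 \<le> (2 - e s - f s) / 4" if "s \<in> S" for s
      using range[OF that] by simp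
    show "0 < h s" if "s \<in> S" "(e s + f s) / 4 = 0 \<or> (2 - e s - f s) / 4 = 0" for s
    proof -
      have "(e s = 1 \<and> f s = 1) \<or> (e s = 0 \<and> f s = 0)"
        using that(2) range[OF that(1)] by auto
      then show ?thesis
        using that(1) pos by (auto simp: joint_level_set_def)
    qed
  qed
  moreover have "\<forall>\<^sub>F t in at_right 0. \<forall>s\<in>S.
      0 \<le> (1 + e s - f s) / 4 + t * (- h s - 1) \<and> 0 \<le> (1 - e s + f s) / 4 + t * (- h s - 1)"
  proof (rule eventually_nonneg_perturbation_pair[OF S])
    show "continuous_on S (\<lambda>s. (1 + e s - f s) / 4)" "continuous_on S (\<lambda>s. (1 - e s + f s) / 4)"
      "continuous_on S (\<lambda>s. - h s - 1)"
      using cont by (auto intro!: continuous_intros)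
    show "0 \<le> (1 + e s - f s) / 4 \<and> 0 \<le> (1 - e s + f s) / 4" if "s \<in> S" for s
      using range[OF that] by simp
    show "0 < - h s - 1" if "s \<in> S" "(1 + e s - f s) / 4 = 0 \<or> (1 - e s + f s) / 4 = 0" for s
    proof -
      have "(e s = 1 \<and> f s = 0) \<or> (e s = 0 \<and> f s = 1)"
        using that(2) range[OF that(1)] by auto
      then show ?thesis
        using that(1) neg by (force simp: joint_level_set_def)
    qed
  qed
  ultimately show ?thesis
    by eventually_elim blast
qed

lemma noisy_compatible_above_half:
  assumes ss: "state_space S u"
    and M1: "measurement S u dichotomic M1" and M2: "measurement S u dichotomic M2"
    and no_parallelogram: "\<not> optimal_parallelogram S (M1 Plus) (M2 Plus)"
  shows "\<exists>l>1/2. l \<le> 1 \<and> noisy_compatible S u dichotomic dichotomic M1 M2 l"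
proof -
  let ?e = "M1 Plus" and ?f = "M2 Plus"
  note e = measurement_dichotomicD(1)[OF M1, of Plus] and f = measurement_dichotomicD(1)[OF M2, of Plus]
  have lin: "linear ?e" "linear ?f" using effectD(1) e f by blast+
  have range: "0 \<le> ?e s \<and> ?e s \<le> 1 \<and> 0 \<le> ?f s \<and> ?f s \<le> 1" if "s \<in> S" for s
    using effectD(2,3)[OF e that] effectD(2,3)[OF f that] by auto
  obtain h :: "'a \<Rightarrow> real" where h: "linear h"
    "\<forall>s\<in>joint_level_set S ?e ?f 1 1 \<union> joint_level_set S ?e ?f 0 0. 0 < h s"
    "\<forall>s\<in>joint_level_set S ?e ?f 1 0 \<union> joint_level_set S ?e ?f 0 1. h s < -1"
    using diagonals_separating_functional[OF ss lin no_parallelogram] by blast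
  have small: "\<forall>\<^sub>F t in at_right (0::real). 0 < t \<and> t \<le> 1/2"
    by (rule eventually_at_rightI[of _ "1/2"]) auto
  obtain \<eta> where perturbed: "\<forall>s\<in>S.
      0 \<le> (?e s + ?f s) / 4 + \<eta> * h s \<and> 0 \<le> (2 - ?e s - ?f s) / 4 + \<eta> * h s \<and>
      0 \<le> (1 + ?e s - ?f s) / 4 + \<eta> * (- h s - 1) \<and> 0 \<le> (1 - ?e s + ?f s) / 4 + \<eta> * (- h s - 1)"
    and \<eta>: "0 < \<eta>" "\<eta> \<le> 1/2"
    using eventually_happens'[OF trivial_limit_at_right_real eventually_conj[OF
        eventually_admissible_perturbation[OF state_spaceD(3)[OF ss] lin h(1) range h(2,3)] small]]
    by blast
  define k where "k v = (1/2 + \<eta>) / 2 * (?e v + ?f v) + \<eta> * h v" for v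
  have "noisy_compatible S u dichotomic dichotomic M1 M2 (1/2 + \<eta>)"
  proof (rule noisy_compatible_uniformI[OF ss M1 M2])
    show "0 \<le> 1/2 + \<eta>" "1/2 + \<eta> \<le> 1" using \<eta> by auto
    show "linear k"
      unfolding k_def using lin h(1) by (intro linear_compose_add linear_mult_left_real)
    fix s assume s: "s \<in> S"
    have "0 \<le> \<eta> * ?e s" "\<eta> * ?e s \<le> \<eta>" "0 \<le> \<eta> * ?f s" "\<eta> * ?f s \<le> \<eta>"
      using range[OF s] \<eta>(1) by (auto intro: mult_left_le)
    moreover have "k s = ?e s / 4 + ?f s / 4 + \<eta> * ?e s / 2 + \<eta> * ?f s / 2 + \<eta> * h s"
      "(1/2 + \<eta>) * ?e s = ?e s / 2 + \<eta> * ?e s" "(1/2 + \<eta>) * ?f s = ?f s / 2 + \<eta> * ?f s"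
      "\<eta> * (- h s - 1) = - (\<eta> * h s) - \<eta>"
      by (simp_all add: k_def algebra_simps)
    moreover have "(1 - (1/2 + \<eta>)) / 2 = 1/4 - \<eta> / 2"
      by (simp add: field_simps)
    moreover note bspec[OF perturbed s, unfolded add_divide_distrib diff_divide_distrib]
    ultimately show "0 \<le> k s \<and> (1/2 + \<eta>) * ?e s + (1/2 + \<eta>) * ?f s - (1/2 + \<eta>) \<le> k s \<and>
        k s \<le> (1/2 + \<eta>) * ?e s + (1 - (1/2 + \<eta>)) / 2 \<and>
        k s \<le> (1/2 + \<eta>) * ?f s + (1 - (1/2 + \<eta>)) / 2"
      by (intro conjI; elim conjE; linarith)
  qed
  then show ?thesis
    using \<eta> by (intro exI[of _ "1/2 + \<eta>"]) auto
qed

lemma max_incompatible_iff_optimal_parallelogram: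
  assumes ss: "state_space S u"
    and M1: "measurement S u dichotomic M1" and M2: "measurement S u dichotomic M2"
  shows "max_incompatible S u M1 M2 \<longleftrightarrow> optimal_parallelogram S (M1 Plus) (M2 Plus)"
proof -
  have "max_incompatible S u M1 M2 \<longleftrightarrow>
      (\<forall>l\<in>{0..1}. noisy_compatible S u dichotomic dichotomic M1 M2 l \<longrightarrow> l \<le> 1/2)"
    unfolding max_incompatible_def by (rule degree_incomp_eq_half_iff[OF noisy_compatible_half[OF assms]])
  also have "\<dots> \<longleftrightarrow> optimal_parallelogram S (M1 Plus) (M2 Plus)"
    using noisy_compatible_le_half[OF ss] noisy_compatible_above_half[OF assms] by force
  finally show ?thesis .
qed

theorem proposition7:
  fixes S :: "'a::euclidean_space set" and u :: "'a \<Rightarrow> real"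
    and M1 M2 :: "pm \<Rightarrow> 'a \<Rightarrow> real"
  assumes "state_space S u"
    and "measurement S u dichotomic M1"
    and "measurement S u dichotomic M2"
  shows "max_incompatible S u M1 M2 \<longleftrightarrow>
    (Pbar S M1 M2 = 1 \<and>
     (\<exists>s1 s2 s3 s4. s1 \<in> S \<and> s2 \<in> S \<and> s3 \<in> S \<and> s4 \<in> S \<and>
        affine_dependent {s1, s2, s3, s4} \<and>
        M1 Plus s1 = 1 \<and> M1 Plus s2 = 1 \<and> M1 Plus s3 = 0 \<and> M1 Plus s4 = 0 \<and>
        M2 Plus s1 = 1 \<and> M2 Plus s4 = 1 \<and> M2 Plus s2 = 0 \<and> M2 Plus s3 = 0))"
  using max_incompatible_iff_optimal_parallelogram[OF assms]
    optimal_parallelogram_iff_affine_dependent[OF assms] by blast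

end
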